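(* Let $\mathcal{N}$ be a nonsingular 2-step nilpotent Lie algebra over $\mathbb{R}$. If $\mathcal{N}$ satisfies the partial automatic continuity, then so does $\mathcal{N}\oplus\mathcal{N}$.
   Context: A 2-step nilpotent Lie algebra $\mathcal{N}$ with center $\mathfrak{z}$ is nonsingular if $\operatorname{ad}X:\mathcal{N}\to[\mathcal{N},\mathcal{N}]$ is surjective for every $X\in\mathcal{N}\setminus\mathfrak{z}$. A Lie ring automorphism is a bijective additive bracket-preserving map (not necessarily $\mathbb{R}$-linear); a central automorphism is a Lie ring automorphism $\mu$ with $\mu(x)-x$ central for all $x$. Field automorphisms: if a Lie algebra is a direct sum of ideals $\mathcal{N}_1\oplus\cdots\oplus\mathcal{N}_k$, for each $\mathcal{N}_i$ that is the realification of a complex Lie algebra choose a $\mathbb{C}$-basis $e_1,\dots,e_m$ and a field automorphism $\varphi$ of $\mathbb{C}$ fixing the structure constants and set $\sigma_i(\sum x_le_l)=\sum\varphi(x_l)e_l$, otherwise $\sigma_i=\mathrm{id}$; $\sigma_1\times\cdots\times\sigma_k$ is a field automorphism. A real nilpotent Lie algebra satisfies the partial automatic continuity if every Lie ring automorphism is a composition $\mu\circ\overline{f}\circ\sigma$ of a central automorphism, an $\mathbb{R}$-linear Lie algebra automorphism and a field automorphism. *)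

theory Defs
  imports "HOL-Analysis.Analysis"
begin

text \<open>A finite-dimensional real Lie algebra is modelled as a Euclidean space type
  together with a bracket operation.\<close>

definition lie_algebra :: "('a::euclidean_space \<Rightarrow> 'a \<Rightarrow> 'a) \<Rightarrow> bool" where
  "lie_algebra br \<longleftrightarrow> bilinear br \<and> (\<forall>x. br x x = 0) \<and>
     (\<forall>x y z. br x (br y z) + br y (br z x) + br z (br x y) = 0)"

definition lie_center :: "('a::euclidean_space \<Rightarrow> 'a \<Rightarrow> 'a) \<Rightarrow> 'a set" where
  "lie_center br = {z. \<forall>x. br z x = 0}"

definition derived_algebra :: "('a::euclidean_space \<Rightarrow> 'a \<Rightarrow> 'a) \<Rightarrow> 'a set" where
  "derived_algebra br = span {br x y | x y. True}"

definition two_step_nilpotent :: "('a::euclidean_space \<Rightarrow> 'a \<Rightarrow> 'a) \<Rightarrow> bool" where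
  "two_step_nilpotent br \<longleftrightarrow> (\<forall>x y z. br x (br y z) = 0) \<and> (\<exists>x y. br x y \<noteq> 0)"

definition nonsingular :: "('a::euclidean_space \<Rightarrow> 'a \<Rightarrow> 'a) \<Rightarrow> bool" where
  "nonsingular br \<longleftrightarrow>
     (\<forall>X. X \<notin> lie_center br \<longrightarrow> range (br X) = derived_algebra br)"

definition lie_ring_aut :: "('a::euclidean_space \<Rightarrow> 'a \<Rightarrow> 'a) \<Rightarrow> ('a \<Rightarrow> 'a) \<Rightarrow> bool" where
  "lie_ring_aut br F \<longleftrightarrow> bij F \<and> (\<forall>x y. F (x + y) = F x + F y) \<and>
     (\<forall>x y. F (br x y) = br (F x) (F y))"

definition central_aut :: "('a::euclidean_space \<Rightarrow> 'a \<Rightarrow> 'a) \<Rightarrow> ('a \<Rightarrow> 'a) \<Rightarrow> bool" where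
  "central_aut br \<mu> \<longleftrightarrow> lie_ring_aut br \<mu> \<and> (\<forall>x. \<mu> x - x \<in> lie_center br)"

definition lie_alg_aut :: "('a::euclidean_space \<Rightarrow> 'a \<Rightarrow> 'a) \<Rightarrow> ('a \<Rightarrow> 'a) \<Rightarrow> bool" where
  "lie_alg_aut br f \<longleftrightarrow> linear f \<and> lie_ring_aut br f"

definition complex_field_aut :: "(complex \<Rightarrow> complex) \<Rightarrow> bool" where
  "complex_field_aut \<phi> \<longleftrightarrow> bij \<phi> \<and> (\<forall>a b. \<phi> (a + b) = \<phi> a + \<phi> b) \<and>
     (\<forall>a b. \<phi> (a * b) = \<phi> a * \<phi> b)"

definition lie_ideal :: "('a::euclidean_space \<Rightarrow> 'a \<Rightarrow> 'a) \<Rightarrow> 'a set \<Rightarrow> bool" where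
  "lie_ideal br V \<longleftrightarrow> subspace V \<and> (\<forall>x v. v \<in> V \<longrightarrow> br x v \<in> V)"

definition is_decomp :: "nat \<Rightarrow> (nat \<Rightarrow> 'a::euclidean_space set) \<Rightarrow> 'a \<Rightarrow> (nat \<Rightarrow> 'a) \<Rightarrow> bool" where
  "is_decomp k V x v \<longleftrightarrow> (\<forall>i<k. v i \<in> V i) \<and> (\<forall>i\<ge>k. v i = 0) \<and> x = (\<Sum>i<k. v i)"

definition ideal_decomposition ::
    "('a::euclidean_space \<Rightarrow> 'a \<Rightarrow> 'a) \<Rightarrow> nat \<Rightarrow> (nat \<Rightarrow> 'a set) \<Rightarrow> bool" where
  "ideal_decomposition br k V \<longleftrightarrow> (\<forall>i<k. lie_ideal br (V i)) \<and>
     (\<forall>x. \<exists>!v. is_decomp k V x v)"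

definition cmul :: "('a::euclidean_space \<Rightarrow> 'a) \<Rightarrow> complex \<Rightarrow> 'a \<Rightarrow> 'a" where
  "cmul J z x = Re z *\<^sub>R x + Im z *\<^sub>R J x"

text \<open>The ideal V is the realification of a complex Lie algebra, with complex structure J.\<close>
definition complex_structure ::
    "('a::euclidean_space \<Rightarrow> 'a \<Rightarrow> 'a) \<Rightarrow> 'a set \<Rightarrow> ('a \<Rightarrow> 'a) \<Rightarrow> bool" where
  "complex_structure br V J \<longleftrightarrow> linear J \<and> (\<forall>x\<in>V. J x \<in> V) \<and> (\<forall>x\<in>V. J (J x) = - x) \<and>
     (\<forall>x\<in>V. \<forall>y\<in>V. br (J x) y = J (br x y))"

definition complex_basis :: "'a::euclidean_space set \<Rightarrow> ('a \<Rightarrow> 'a) \<Rightarrow> nat \<Rightarrow> (nat \<Rightarrow> 'a) \<Rightarrow> bool" where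
  "complex_basis V J m e \<longleftrightarrow> (\<forall>l<m. e l \<in> V) \<and>
     (\<forall>x\<in>V. \<exists>!c. (\<forall>l\<ge>m. c l = 0) \<and> x = (\<Sum>l<m. cmul J (c l) (e l)))"

definition complex_field_piece ::
    "('a::euclidean_space \<Rightarrow> 'a \<Rightarrow> 'a) \<Rightarrow> 'a set \<Rightarrow> ('a \<Rightarrow> 'a) \<Rightarrow> bool" where
  "complex_field_piece br V s \<longleftrightarrow>
     (\<exists>J m e \<phi>. complex_structure br V J \<and> complex_basis V J m e \<and> complex_field_aut \<phi> \<and>
        (\<forall>p<m. \<forall>q<m. \<exists>c. (\<forall>r\<ge>m. c r = 0) \<and>
            br (e p) (e q) = (\<Sum>r<m. cmul J (c r) (e r)) \<and> (\<forall>r<m. \<phi> (c r) = c r)) \<and>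
        (\<forall>c. (\<forall>l\<ge>m. c l = 0) \<longrightarrow>
            s (\<Sum>l<m. cmul J (c l) (e l)) = (\<Sum>l<m. cmul J (\<phi> (c l)) (e l))))"

definition field_aut :: "('a::euclidean_space \<Rightarrow> 'a \<Rightarrow> 'a) \<Rightarrow> ('a \<Rightarrow> 'a) \<Rightarrow> bool" where
  "field_aut br \<sigma> \<longleftrightarrow>
     (\<exists>k V s. ideal_decomposition br k V \<and>
        (\<forall>i<k. (\<forall>x\<in>V i. s i x = x) \<or> complex_field_piece br (V i) (s i)) \<and>
        (\<forall>x v. is_decomp k V x v \<longrightarrow> \<sigma> x = (\<Sum>i<k. s i (v i))))"

definition partial_automatic_continuity :: "('a::euclidean_space \<Rightarrow> 'a \<Rightarrow> 'a) \<Rightarrow> bool" where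
  "partial_automatic_continuity br \<longleftrightarrow>
     (\<forall>F. lie_ring_aut br F \<longrightarrow>
        (\<exists>\<mu> f \<sigma>. central_aut br \<mu> \<and> lie_alg_aut br f \<and> field_aut br \<sigma> \<and> F = \<mu> \<circ> f \<circ> \<sigma>))"

definition prod_bracket ::
    "('a::euclidean_space \<Rightarrow> 'a \<Rightarrow> 'a) \<Rightarrow> ('b::euclidean_space \<Rightarrow> 'b \<Rightarrow> 'b) \<Rightarrow>
     'a \<times> 'b \<Rightarrow> 'a \<times> 'b \<Rightarrow> 'a \<times> 'b" where
  "prod_bracket br1 br2 x y = (br1 (fst x) (fst y), br2 (snd x) (snd y))"

end

theory Submission
  imports Defs
begin

text \<open>Write \<open>Z\<close> for the centre of \<open>N\<close> and \<open>D = [N,N]\<close>. In \<open>N \<oplus> N\<close> the centre is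
  \<open>Z \<times> Z\<close>, and by nonsingularity the image of \<open>ad (X, 0)\<close> is \<open>D \<times> 0\<close> for \<open>X \<notin> Z\<close>. A Lie ring
  automorphism \<open>F\<close> maps images of \<open>ad\<close> onto images of \<open>ad\<close> and fixes \<open>D \<times> D\<close>, the set of all
  brackets, so exactly one component of \<open>F (X, 0)\<close> is noncentral. As \<open>N\<close> is not the union of
  two proper subgroups, \<open>F\<close> either preserves or swaps the two factors modulo the centre.

  If it preserves them, the component maps \<open>X \<mapsto> fst (F (X, 0))\<close> and \<open>Y \<mapsto> snd (F (0, Y))\<close>
  become Lie ring automorphisms \<open>H\<^sub>1\<close>, \<open>H\<^sub>2\<close> of \<open>N\<close> after a central correction on a complement
  of \<open>D\<close> in \<open>Z\<close>, and \<open>F = \<mu> \<circ> (H\<^sub>1 \<times> H\<^sub>2)\<close> with \<open>\<mu>\<close> central. Decomposing \<open>H\<^sub>1\<close> and \<open>H\<^sub>2\<close>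
  by hypothesis and taking products of the central, linear and field parts decomposes \<open>F\<close>.
  The swapping case reduces to this one by composing with the flip of the two factors.\<close>

section \<open>Lie ring automorphisms\<close>

lemma lie_ring_aut_add: "lie_ring_aut br F \<Longrightarrow> F (x + y) = F x + F y"
  by (simp add: lie_ring_aut_def)

lemma lie_ring_aut_bracket: "lie_ring_aut br F \<Longrightarrow> F (br x y) = br (F x) (F y)"
  by (simp add: lie_ring_aut_def)

lemma lie_ring_aut_additive: "lie_ring_aut br F \<Longrightarrow> Modules.additive F"
  by (simp add: lie_ring_aut_def Modules.additive_def)

lemma lie_ring_aut_zero: "lie_ring_aut br F \<Longrightarrow> F 0 = 0"
  using additive.zero lie_ring_aut_additive by blast

lemma lie_ring_aut_diff: "lie_ring_aut br F \<Longrightarrow> F (x - y) = F x - F y"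
  using additive.diff lie_ring_aut_additive by blast

lemma lie_ring_aut_eq_iff: "lie_ring_aut br F \<Longrightarrow> F x = F y \<longleftrightarrow> x = y"
  by (meson bij_is_inj inj_eq lie_ring_aut_def)

lemma lie_ring_aut_inv_apply: "lie_ring_aut br F \<Longrightarrow> F (inv F y) = y"
  by (meson bij_inv_eq_iff lie_ring_aut_def)

lemma lie_ring_aut_inv_apply_left: "lie_ring_aut br F \<Longrightarrow> inv F (F x) = x"
  by (meson bij_is_inj inv_f_f lie_ring_aut_def)

lemma lie_ring_aut_comp:
  "lie_ring_aut br F \<Longrightarrow> lie_ring_aut br G \<Longrightarrow> lie_ring_aut br (F \<circ> G)"
  unfolding lie_ring_aut_def by (auto intro: bij_comp)

lemma lie_ring_aut_inv:
  assumes F: "lie_ring_aut br F"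
  shows "lie_ring_aut br (inv F)"
  unfolding lie_ring_aut_def
proof (intro conjI allI)
  show "bij (inv F)"
    using F bij_imp_bij_inv by (auto simp: lie_ring_aut_def)
  fix x y
  have "F (inv F x + inv F y) = x + y"
    by (simp add: lie_ring_aut_add[OF F] lie_ring_aut_inv_apply[OF F])
  then show "inv F (x + y) = inv F x + inv F y"
    by (metis lie_ring_aut_inv_apply_left[OF F])
  have "F (br (inv F x) (inv F y)) = br x y"
    by (simp add: lie_ring_aut_bracket[OF F] lie_ring_aut_inv_apply[OF F])
  then show "inv F (br x y) = br (inv F x) (inv F y)"
    by (metis lie_ring_aut_inv_apply_left[OF F])
qed

lemma lie_ring_aut_surj: "lie_ring_aut br F \<Longrightarrow> range F = UNIV"
  by (simp add: lie_ring_aut_def bij_is_surj)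

lemma lie_ring_aut_eq_0_iff: "lie_ring_aut br F \<Longrightarrow> F x = 0 \<longleftrightarrow> x = 0"
  by (metis lie_ring_aut_eq_iff lie_ring_aut_zero)

lemma lie_ring_aut_center_iff:
  assumes F: "lie_ring_aut br F"
  shows "F x \<in> lie_center br \<longleftrightarrow> x \<in> lie_center br"
proof -
  have "x \<in> lie_center br \<longleftrightarrow> (\<forall>y. br (F x) (F y) = 0)"
    by (simp add: lie_center_def lie_ring_aut_bracket[OF F, symmetric] lie_ring_aut_eq_0_iff[OF F])
  also have "\<dots> \<longleftrightarrow> (\<forall>z\<in>range F. br (F x) z = 0)"
    by simp
  finally show ?thesis
    by (simp add: lie_center_def lie_ring_aut_surj[OF F])
qed

lemma lie_ring_aut_image_range:
  assumes F: "lie_ring_aut br F"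
  shows "F ` range (br x) = range (br (F x))"
proof -
  have "F ` range (br x) = br (F x) ` range F"
    by (simp add: image_image lie_ring_aut_bracket[OF F])
  then show ?thesis
    by (simp add: lie_ring_aut_surj[OF F])
qed

lemma lie_ring_aut_image_brackets:
  assumes F: "lie_ring_aut br F"
  shows "F ` {br x y | x y. True} = {br x y | x y. True}"
proof -
  have brackets: "{br x y | x y. True} = (\<Union>x. range (br x))"
    by blast
  have "F ` {br x y | x y. True} = (\<Union>x. range (br (F x)))"
    unfolding brackets by (simp only: image_UN lie_ring_aut_image_range[OF F])
  also have "\<dots> = (\<Union>u\<in>range F. range (br u))"
    by (simp only: image_image)
  finally show ?thesis
    unfolding brackets by (simp add: lie_ring_aut_surj[OF F])
qed

lemma subspace_lie_center: "bilinear br \<Longrightarrow> subspace (lie_center br)"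
  unfolding subspace_def lie_center_def
  by (simp add: bilinear_ladd bilinear_lmul bilinear_lzero)

lemma central_aut_comp:
  assumes br: "bilinear br" and \<mu>: "central_aut br \<mu>" and \<nu>: "central_aut br \<nu>"
  shows "central_aut br (\<mu> \<circ> \<nu>)"
  unfolding central_aut_def
proof (intro conjI allI)
  show "lie_ring_aut br (\<mu> \<circ> \<nu>)"
    using \<mu> \<nu> lie_ring_aut_comp by (auto simp: central_aut_def)
  fix x
  have "\<mu> (\<nu> x) - \<nu> x \<in> lie_center br" "\<nu> x - x \<in> lie_center br"
    using \<mu> \<nu> by (simp_all add: central_aut_def)
  then have "\<mu> (\<nu> x) - \<nu> x + (\<nu> x - x) \<in> lie_center br"
    by (rule subspace_add[OF subspace_lie_center[OF br]])
  then show "(\<mu> \<circ> \<nu>) x - x \<in> lie_center br"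
    by simp
qed

section \<open>Direct sums of Lie algebras\<close>

lemma prod_bracket_Pair [simp]: "prod_bracket br1 br2 (a, b) (c, d) = (br1 a c, br2 b d)"
  by (simp add: prod_bracket_def)

lemma lie_center_prod_bracket:
  "lie_center (prod_bracket br1 br2) = lie_center br1 \<times> lie_center br2"
proof (intro set_eqI iffI)
  fix p assume "p \<in> lie_center (prod_bracket br1 br2)"
  then have "prod_bracket br1 br2 p (x, y) = 0" for x y
    by (simp add: lie_center_def)
  then have "br1 (fst p) x = 0 \<and> br2 (snd p) y = 0" for x y
    by (simp add: prod_bracket_def zero_prod_def)
  then show "p \<in> lie_center br1 \<times> lie_center br2"
    by (simp add: lie_center_def mem_Times_iff)
qed (simp add: lie_center_def prod_bracket_def mem_Times_iff zero_prod_def)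

lemma range_prod_bracket:
  "range (prod_bracket br1 br2 p) = range (br1 (fst p)) \<times> range (br2 (snd p))"
proof (intro set_eqI iffI)
  fix w assume "w \<in> range (br1 (fst p)) \<times> range (br2 (snd p))"
  then obtain x y where "fst w = br1 (fst p) x" "snd w = br2 (snd p) y"
    by (auto simp: mem_Times_iff)
  then have "w = prod_bracket br1 br2 p (x, y)"
    by (simp add: prod_bracket_def prod_eq_iff)
  then show "w \<in> range (prod_bracket br1 br2 p)"
    by simp
qed (auto simp: prod_bracket_def)

lemma brackets_prod_bracket:
  "{prod_bracket br1 br2 x y | x y. True} = {br1 x y | x y. True} \<times> {br2 x y | x y. True}"
  by (auto simp: prod_bracket_def)

lemma lie_ring_aut_map_prod:
  assumes F1: "lie_ring_aut br1 F1" and F2: "lie_ring_aut br2 F2"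
  shows "lie_ring_aut (prod_bracket br1 br2) (map_prod F1 F2)"
  unfolding lie_ring_aut_def
proof (intro conjI allI)
  show "bij (map_prod F1 F2)"
    using bij_betw_map_prod[of F1 UNIV UNIV F2 UNIV UNIV] F1 F2 by (simp add: lie_ring_aut_def)
  fix x y :: "'a \<times> 'b"
  show "map_prod F1 F2 (x + y) = map_prod F1 F2 x + map_prod F1 F2 y"
    by (cases x; cases y) (simp add: lie_ring_aut_add[OF F1] lie_ring_aut_add[OF F2])
  show "map_prod F1 F2 (prod_bracket br1 br2 x y) =
      prod_bracket br1 br2 (map_prod F1 F2 x) (map_prod F1 F2 y)"
    by (cases x; cases y) (simp add: lie_ring_aut_bracket[OF F1] lie_ring_aut_bracket[OF F2])
qed

lemma central_aut_map_prod:
  assumes "central_aut br1 \<mu>1" "central_aut br2 \<mu>2"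
  shows "central_aut (prod_bracket br1 br2) (map_prod \<mu>1 \<mu>2)"
  using assms lie_ring_aut_map_prod
  by (auto simp: central_aut_def lie_center_prod_bracket mem_Times_iff)

lemma linear_map_prod: "linear f \<Longrightarrow> linear g \<Longrightarrow> linear (map_prod f g)"
  by (rule linearI) (auto simp: linear_add linear_scale)

lemma lie_alg_aut_map_prod:
  assumes "lie_alg_aut br1 f1" "lie_alg_aut br2 f2"
  shows "lie_alg_aut (prod_bracket br1 br2) (map_prod f1 f2)"
  using assms linear_map_prod lie_ring_aut_map_prod by (auto simp: lie_alg_aut_def)

lemma lie_ring_aut_swap: "lie_ring_aut (prod_bracket br br) prod.swap"
  by (simp add: lie_ring_aut_def prod_bracket_def bij_def)

lemma central_aut_swap_conj:
  assumes "central_aut (prod_bracket br br) \<mu>"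
  shows "central_aut (prod_bracket br br) (prod.swap \<circ> \<mu> \<circ> prod.swap)"
  using assms lie_ring_aut_comp[OF lie_ring_aut_comp[OF lie_ring_aut_swap]] lie_ring_aut_swap
  by (auto simp: central_aut_def lie_center_prod_bracket mem_Times_iff)

lemma lie_alg_aut_swap_comp:
  assumes "lie_alg_aut (prod_bracket br br) f"
  shows "lie_alg_aut (prod_bracket br br) (prod.swap \<circ> f)"
proof -
  have "linear prod.swap"
    by (rule linearI) auto
  then show ?thesis
    using assms lie_ring_aut_swap lie_ring_aut_comp linear_compose by (auto simp: lie_alg_aut_def)
qed

lemma bilinear_prod_bracket:
  assumes "bilinear br1" "bilinear br2"
  shows "bilinear (prod_bracket br1 br2)"
  unfolding bilinear_def[of "prod_bracket br1 br2"]
  by (auto intro!: linearI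
      simp: prod_bracket_def assms bilinear_ladd bilinear_radd bilinear_lmul bilinear_rmul)

section \<open>Field automorphisms of a direct sum\<close>

lemma complex_field_piece_embedding:
  fixes \<iota> :: "'a::euclidean_space \<Rightarrow> 'b::euclidean_space"
  assumes lin: "linear \<iota>" "linear \<pi>" and left_inv: "\<And>x. \<pi> (\<iota> x) = x"
    and hom: "\<And>x y. \<iota> (br x y) = br' (\<iota> x) (\<iota> y)"
    and t': "\<And>x. t' (\<iota> x) = \<iota> (t x)"
    and piece: "complex_field_piece br W t"
  shows "complex_field_piece br' (\<iota> ` W) t'"
proof -
  obtain J m e \<phi> where cs: "complex_structure br W J" and cb: "complex_basis W J m e"
    and \<phi>: "complex_field_aut \<phi>"
    and structure_constants: "\<forall>p<m. \<forall>q<m. \<exists>c. (\<forall>r\<ge>m. c r = 0) \<and>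
            br (e p) (e q) = (\<Sum>r<m. cmul J (c r) (e r)) \<and> (\<forall>r<m. \<phi> (c r) = c r)"
    and t: "\<forall>c. (\<forall>l\<ge>m. c l = 0) \<longrightarrow>
            t (\<Sum>l<m. cmul J (c l) (e l)) = (\<Sum>l<m. cmul J (\<phi> (c l)) (e l))"
    using piece unfolding complex_field_piece_def by blast
  define J' where "J' = \<iota> \<circ> J \<circ> \<pi>"
  define e' where "e' l = \<iota> (e l)" for l
  have inj: "inj \<iota>"
    by (metis injI left_inv)
  have combination: "(\<Sum>l<m. cmul J' (c l) (e' l)) = \<iota> (\<Sum>l<m. cmul J (c l) (e l))" for c
    by (simp add: J'_def e'_def cmul_def left_inv linear_sum[OF lin(1)]
        linear_add[OF lin(1)] linear_scale[OF lin(1)])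
  have "complex_structure br' (\<iota> ` W) J'"
    using cs lin unfolding complex_structure_def J'_def
    by (auto simp: left_inv hom[symmetric] linear_compose linear_neg)
  moreover have "complex_basis (\<iota> ` W) J' m e'"
    unfolding complex_basis_def
  proof (intro conjI ballI)
    show "\<forall>l<m. e' l \<in> \<iota> ` W"
      using cb by (simp add: complex_basis_def e'_def)
    fix y assume "y \<in> \<iota> ` W"
    then obtain x where "x \<in> W" "y = \<iota> x"
      by blast
    then show "\<exists>!c. (\<forall>l\<ge>m. c l = 0) \<and> y = (\<Sum>l<m. cmul J' (c l) (e' l))"
      using cb by (simp add: complex_basis_def combination inj_eq[OF inj])
  qed
  moreover have "\<forall>p<m. \<forall>q<m. \<exists>c. (\<forall>r\<ge>m. c r = 0) \<and>
      br' (e' p) (e' q) = (\<Sum>r<m. cmul J' (c r) (e' r)) \<and> (\<forall>r<m. \<phi> (c r) = c r)"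
    using structure_constants
    by (simp add: e'_def hom[symmetric] combination[unfolded e'_def] inj_eq[OF inj])
  moreover have "\<forall>c. (\<forall>l\<ge>m. c l = 0) \<longrightarrow>
      t' (\<Sum>l<m. cmul J' (c l) (e' l)) = (\<Sum>l<m. cmul J' (\<phi> (c l)) (e' l))"
    using t by (simp add: combination t')
  ultimately show ?thesis
    unfolding complex_field_piece_def using \<phi> by blast
qed

text \<open>An ideal decomposition of \<open>N\<^sub>1 \<oplus> N\<^sub>2\<close> lists the \<open>k\<^sub>1\<close> summands of \<open>N\<^sub>1\<close>, embedded as \<open>V\<^sub>1 i \<times> 0\<close>,
  followed by those of \<open>N\<^sub>2\<close>.\<close>

definition seq_append :: "nat \<Rightarrow> (nat \<Rightarrow> 'a) \<Rightarrow> (nat \<Rightarrow> 'a) \<Rightarrow> nat \<Rightarrow> 'a" where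
  "seq_append k f g i = (if i < k then f i else g (i - k))"

lemma sum_seq_append: "(\<Sum>i<k + n. seq_append k f g i) = (\<Sum>i<k. f i) + (\<Sum>j<n. g j)"
  by (induction n) (simp_all add: seq_append_def ac_simps)

definition summands_prod :: "nat \<Rightarrow> (nat \<Rightarrow> 'a::zero) \<Rightarrow> (nat \<Rightarrow> 'b::zero) \<Rightarrow> nat \<Rightarrow> 'a \<times> 'b" where
  "summands_prod k u1 u2 = seq_append k (\<lambda>i. (u1 i, 0)) (\<lambda>j. (0, u2 j))"

definition ideals_prod :: "nat \<Rightarrow> (nat \<Rightarrow> 'a::zero set) \<Rightarrow> (nat \<Rightarrow> 'b::zero set) \<Rightarrow> nat \<Rightarrow> ('a \<times> 'b) set" where
  "ideals_prod k V1 V2 = seq_append k (\<lambda>i. V1 i \<times> {0}) (\<lambda>j. {0} \<times> V2 j)"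

lemma sum_summands_prod:
  "(\<Sum>i<k1 + k2. summands_prod k1 u1 u2 i) = ((\<Sum>i<k1. u1 i), (\<Sum>j<k2. u2 j))"
  by (simp add: summands_prod_def sum_seq_append prod_eq_iff fst_sum snd_sum)

lemma is_decomp_summands_prod:
  assumes u1: "is_decomp k1 V1 x1 u1" and u2: "is_decomp k2 V2 x2 u2"
  shows "is_decomp (k1 + k2) (ideals_prod k1 V1 V2) (x1, x2) (summands_prod k1 u1 u2)"
  unfolding is_decomp_def
proof (intro conjI allI impI)
  fix i assume "i < k1 + k2"
  then show "summands_prod k1 u1 u2 i \<in> ideals_prod k1 V1 V2 i"
    using u1 u2 by (auto simp: is_decomp_def summands_prod_def ideals_prod_def seq_append_def)
next
  fix i assume "k1 + k2 \<le> i"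
  then show "summands_prod k1 u1 u2 i = 0"
    using u2 by (simp add: is_decomp_def summands_prod_def seq_append_def zero_prod_def)
next
  show "(x1, x2) = (\<Sum>i<k1 + k2. summands_prod k1 u1 u2 i)"
    using u1 u2 by (simp add: sum_summands_prod is_decomp_def)
qed

lemma is_decomp_ideals_prod_iff:
  "is_decomp (k1 + k2) (ideals_prod k1 V1 V2) x v \<longleftrightarrow>
    (\<exists>u1 u2. is_decomp k1 V1 (fst x) u1 \<and> is_decomp k2 V2 (snd x) u2 \<and>
      v = summands_prod k1 u1 u2)"
proof
  assume v: "is_decomp (k1 + k2) (ideals_prod k1 V1 V2) x v"
  define u1 where "u1 i = (if i < k1 then fst (v i) else 0)" for i
  define u2 where "u2 j = (if j < k2 then snd (v (k1 + j)) else 0)" for j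
  have mem: "v i \<in> ideals_prod k1 V1 V2 i" if "i < k1 + k2" for i
    using v that by (simp add: is_decomp_def)
  have "v i = summands_prod k1 u1 u2 i" for i
    using mem[of i] v
    by (cases "i < k1"; cases "i < k1 + k2")
       (auto simp: is_decomp_def summands_prod_def ideals_prod_def seq_append_def u1_def u2_def
         mem_Times_iff prod_eq_iff)
  then have v_eq: "v = summands_prod k1 u1 u2" ..
  have "x = ((\<Sum>i<k1. u1 i), (\<Sum>j<k2. u2 j))"
    using v by (simp add: is_decomp_def v_eq sum_summands_prod)
  moreover have "u1 i \<in> V1 i" if "i < k1" for i
    using mem[of i] that by (simp add: ideals_prod_def seq_append_def u1_def mem_Times_iff)
  moreover have "u2 j \<in> V2 j" if "j < k2" for j
    using mem[of "k1 + j"] that by (simp add: ideals_prod_def seq_append_def u2_def mem_Times_iff)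
  ultimately have "is_decomp k1 V1 (fst x) u1" "is_decomp k2 V2 (snd x) u2"
    by (auto simp: is_decomp_def u1_def u2_def)
  with v_eq show "\<exists>u1 u2. is_decomp k1 V1 (fst x) u1 \<and> is_decomp k2 V2 (snd x) u2 \<and>
      v = summands_prod k1 u1 u2"
    by blast
next
  assume "\<exists>u1 u2. is_decomp k1 V1 (fst x) u1 \<and> is_decomp k2 V2 (snd x) u2 \<and>
      v = summands_prod k1 u1 u2"
  then show "is_decomp (k1 + k2) (ideals_prod k1 V1 V2) x v"
    using is_decomp_summands_prod[of k1 V1 "fst x" _ k2 V2 "snd x"] by auto
qed

lemma lie_ideal_Times_zero:
  assumes "lie_ideal br1 V" "bilinear br2"
  shows "lie_ideal (prod_bracket br1 br2) (V \<times> {0})"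
  using assms subspace_Times[OF _ subspace_single_0]
  by (auto simp: lie_ideal_def prod_bracket_def mem_Times_iff bilinear_rzero)

lemma lie_ideal_zero_Times:
  assumes "bilinear br1" "lie_ideal br2 V"
  shows "lie_ideal (prod_bracket br1 br2) ({0} \<times> V)"
  using assms subspace_Times[OF subspace_single_0]
  by (auto simp: lie_ideal_def prod_bracket_def mem_Times_iff bilinear_rzero)

lemma is_decomp_unique:
  "ideal_decomposition br k V \<Longrightarrow> is_decomp k V x u \<Longrightarrow> is_decomp k V x u' \<Longrightarrow> u = u'"
  unfolding ideal_decomposition_def by blast

lemma ideal_decomposition_prod:
  assumes br: "bilinear br1" "bilinear br2"
    and V1: "ideal_decomposition br1 k1 V1" and V2: "ideal_decomposition br2 k2 V2"
  shows "ideal_decomposition (prod_bracket br1 br2) (k1 + k2) (ideals_prod k1 V1 V2)"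
  unfolding ideal_decomposition_def
proof (intro conjI allI impI)
  fix i assume i: "i < k1 + k2"
  show "lie_ideal (prod_bracket br1 br2) (ideals_prod k1 V1 V2 i)"
  proof (cases "i < k1")
    case True
    then show ?thesis
      using V1 br(2) by (simp add: lie_ideal_Times_zero ideal_decomposition_def ideals_prod_def seq_append_def)
  next
    case False
    then have "i - k1 < k2"
      using i by simp
    with False show ?thesis
      using V2 br(1) by (simp add: lie_ideal_zero_Times ideal_decomposition_def ideals_prod_def seq_append_def)
  qed
next
  fix x :: "'a \<times> 'b"
  obtain u1 where u1: "is_decomp k1 V1 (fst x) u1"
    using V1 unfolding ideal_decomposition_def by blast
  obtain u2 where u2: "is_decomp k2 V2 (snd x) u2"
    using V2 unfolding ideal_decomposition_def by blast
  have "v = summands_prod k1 u1 u2" if v: "is_decomp (k1 + k2) (ideals_prod k1 V1 V2) x v" for v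
  proof -
    obtain u1' u2' where "is_decomp k1 V1 (fst x) u1'" "is_decomp k2 V2 (snd x) u2'"
      and "v = summands_prod k1 u1' u2'"
      using v by (auto simp: is_decomp_ideals_prod_iff)
    then show ?thesis
      using is_decomp_unique[OF V1 u1] is_decomp_unique[OF V2 u2] by simp
  qed
  moreover have "is_decomp (k1 + k2) (ideals_prod k1 V1 V2) x (summands_prod k1 u1 u2)"
    using u1 u2 by (auto simp: is_decomp_ideals_prod_iff)
  ultimately show "\<exists>!v. is_decomp (k1 + k2) (ideals_prod k1 V1 V2) x v"
    by blast
qed

lemma complex_field_piece_Times_zero:
  fixes br1 :: "'a::euclidean_space \<Rightarrow> 'a \<Rightarrow> 'a" and br2 :: "'b::euclidean_space \<Rightarrow> 'b \<Rightarrow> 'b"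
  assumes br2: "bilinear br2" and piece: "complex_field_piece br1 V t"
  shows "complex_field_piece (prod_bracket br1 br2) (V \<times> {0}) (\<lambda>p. (t (fst p), 0))"
proof -
  have "linear (\<lambda>x::'a. (x, 0::'b))" "linear (fst :: 'a \<times> 'b \<Rightarrow> 'a)"
    by (auto intro: linearI)
  then have "complex_field_piece (prod_bracket br1 br2) ((\<lambda>x. (x, 0)) ` V) (\<lambda>p. (t (fst p), 0))"
    by (rule complex_field_piece_embedding[OF _ _ _ _ _ piece]) (simp_all add: bilinear_rzero[OF br2])
  moreover have "(\<lambda>x. (x, 0::'b)) ` V = V \<times> {0}"
    by auto
  ultimately show ?thesis
    by simp
qed

lemma complex_field_piece_zero_Times:
  fixes br1 :: "'a::euclidean_space \<Rightarrow> 'a \<Rightarrow> 'a" and br2 :: "'b::euclidean_space \<Rightarrow> 'b \<Rightarrow> 'b"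
  assumes br1: "bilinear br1" and piece: "complex_field_piece br2 V t"
  shows "complex_field_piece (prod_bracket br1 br2) ({0} \<times> V) (\<lambda>p. (0, t (snd p)))"
proof -
  have "linear (Pair (0::'a) :: 'b \<Rightarrow> 'a \<times> 'b)" "linear (snd :: 'a \<times> 'b \<Rightarrow> 'b)"
    by (auto intro: linearI)
  then have "complex_field_piece (prod_bracket br1 br2) (Pair 0 ` V) (\<lambda>p. (0, t (snd p)))"
    by (rule complex_field_piece_embedding[OF _ _ _ _ _ piece]) (simp_all add: bilinear_rzero[OF br1])
  moreover have "Pair (0::'a) ` V = {0} \<times> V"
    by auto
  ultimately show ?thesis
    by simp
qed

lemma field_aut_map_prod:
  fixes br1 :: "'a::euclidean_space \<Rightarrow> 'a \<Rightarrow> 'a" and br2 :: "'b::euclidean_space \<Rightarrow> 'b \<Rightarrow> 'b"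
  assumes br: "bilinear br1" "bilinear br2"
    and \<sigma>1: "field_aut br1 \<sigma>1" and \<sigma>2: "field_aut br2 \<sigma>2"
  shows "field_aut (prod_bracket br1 br2) (map_prod \<sigma>1 \<sigma>2)"
proof -
  obtain k1 V1 s1 where V1: "ideal_decomposition br1 k1 V1"
    and s1: "\<forall>i<k1. (\<forall>x\<in>V1 i. s1 i x = x) \<or> complex_field_piece br1 (V1 i) (s1 i)"
    and sum1: "\<forall>x v. is_decomp k1 V1 x v \<longrightarrow> \<sigma>1 x = (\<Sum>i<k1. s1 i (v i))"
    using \<sigma>1 unfolding field_aut_def by blast
  obtain k2 V2 s2 where V2: "ideal_decomposition br2 k2 V2"
    and s2: "\<forall>i<k2. (\<forall>x\<in>V2 i. s2 i x = x) \<or> complex_field_piece br2 (V2 i) (s2 i)"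
    and sum2: "\<forall>x v. is_decomp k2 V2 x v \<longrightarrow> \<sigma>2 x = (\<Sum>i<k2. s2 i (v i))"
    using \<sigma>2 unfolding field_aut_def by blast
  define V where "V = ideals_prod k1 V1 V2"
  define s where "s = seq_append k1 (\<lambda>i p. (s1 i (fst p), 0)) (\<lambda>j p. (0, s2 j (snd p)))"
  have "(\<forall>x\<in>V i. s i x = x) \<or> complex_field_piece (prod_bracket br1 br2) (V i) (s i)"
    if i: "i < k1 + k2" for i
  proof (cases "i < k1")
    case True
    then have "(\<forall>x\<in>V1 i. s1 i x = x) \<or> complex_field_piece br1 (V1 i) (s1 i)"
      using s1 by blast
    with True show ?thesis
      using complex_field_piece_Times_zero[OF br(2)]
      by (auto simp: V_def s_def ideals_prod_def seq_append_def)
  next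
    case False
    then have "i - k1 < k2"
      using i by simp
    then have "(\<forall>x\<in>V2 (i - k1). s2 (i - k1) x = x) \<or>
        complex_field_piece br2 (V2 (i - k1)) (s2 (i - k1))"
      using s2 by blast
    with False show ?thesis
      using complex_field_piece_zero_Times[OF br(1)]
      by (auto simp: V_def s_def ideals_prod_def seq_append_def)
  qed
  moreover have "map_prod \<sigma>1 \<sigma>2 x = (\<Sum>i<k1 + k2. s i (v i))" if v: "is_decomp (k1 + k2) V x v" for x v
  proof -
    obtain u1 u2 where u1: "is_decomp k1 V1 (fst x) u1" and u2: "is_decomp k2 V2 (snd x) u2"
      and v_eq: "v = summands_prod k1 u1 u2"
      using v by (auto simp: V_def is_decomp_ideals_prod_iff)
    have "s i (v i) = summands_prod k1 (\<lambda>i. s1 i (u1 i)) (\<lambda>j. s2 j (u2 j)) i" for i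
      by (simp add: v_eq s_def summands_prod_def seq_append_def)
    then have "(\<Sum>i<k1 + k2. s i (v i)) = (\<Sum>i<k1. s1 i (u1 i), \<Sum>j<k2. s2 j (u2 j))"
      by (simp add: sum_summands_prod)
    then show ?thesis
      using sum1 sum2 u1 u2 by (cases x) simp
  qed
  ultimately show ?thesis
    unfolding field_aut_def
    using ideal_decomposition_prod[OF br V1 V2] unfolding V_def by blast
qed

section \<open>Two-step nilpotent Lie algebras\<close>

lemma union_two_subgroups_eq_UNIV:
  fixes A B :: "'a::ab_group_add set"
  assumes cover: "A \<union> B = UNIV"
    and A: "\<And>x y. x \<in> A \<Longrightarrow> y \<in> A \<Longrightarrow> x - y \<in> A"
    and B: "\<And>x y. x \<in> B \<Longrightarrow> y \<in> B \<Longrightarrow> x - y \<in> B"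
  shows "A = UNIV \<or> B = UNIV"
proof (rule ccontr)
  assume "\<not> ?thesis"
  then obtain a b where "a \<notin> A" "b \<notin> B"
    by blast
  with cover have "a \<in> B" "b \<in> A"
    by blast+
  have "a + b \<in> A \<or> a + b \<in> B"
    using cover by blast
  then show False
  proof
    assume "a + b \<in> A"
    then have "a + b - b \<in> A"
      using A \<open>b \<in> A\<close> by blast
    with \<open>a \<notin> A\<close> show False
      by simp
  next
    assume "a + b \<in> B"
    then have "a + b - a \<in> B"
      using B \<open>a \<in> B\<close> by blast
    with \<open>b \<notin> B\<close> show False
      by simp
  qed
qed

lemma exists_complement_projection:
  fixes D Z :: "'a::real_vector set"
  assumes D: "subspace D" and Z: "subspace Z" and DZ: "D \<subseteq> Z"
  obtains q where "linear q" "\<And>x. q x \<in> Z" "\<And>d. d \<in> D \<Longrightarrow> q d = 0"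
    "\<And>z. z \<in> Z \<Longrightarrow> z - q z \<in> D" "\<And>x. q (q x) = q x"
proof -
  obtain rZ where rZ: "range rZ \<subseteq> Z" "linear rZ" "\<forall>z\<in>Z. rZ z = z"
    using linear_exists_left_inverse_on[OF linear_id Z] by auto
  obtain rD where rD: "range rD \<subseteq> D" "linear rD" "\<forall>d\<in>D. rD d = d"
    using linear_exists_left_inverse_on[OF linear_id D] by auto
  have rD_idem: "rD (rD x) = rD x" for x
    using rD by (simp add: image_subset_iff)
  define q where "q x = rZ x - rD (rZ x)" for x
  have q_Z: "q x \<in> Z" for x
  proof -
    have "rZ x \<in> Z" "rD (rZ x) \<in> Z"
      using rZ(1) rD(1) DZ by (auto simp: image_subset_iff)
    then show ?thesis
      unfolding q_def by (rule subspace_diff[OF Z])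
  qed
  show ?thesis
  proof
    have "linear (rD \<circ> rZ)"
      using rZ(2) rD(2) by (rule linear_compose)
    then show "linear q"
      unfolding q_def using linear_compose_sub[OF rZ(2)] by (simp add: o_def)
    show "q x \<in> Z" for x
      by (rule q_Z)
    show "q d = 0" if "d \<in> D" for d
      using that rZ(3) rD(3) DZ by (simp add: q_def subset_iff)
    show "z - q z \<in> D" if "z \<in> Z" for z
      using that rZ(3) rD(1) by (simp add: q_def image_subset_iff)
    show "q (q x) = q x" for x
      using q_Z[of x] rZ(3) by (simp add: q_def linear_diff[OF rD(2)] rD_idem)
  qed
qed

locale two_step_nilpotent_lie =
  fixes br :: "'a::euclidean_space \<Rightarrow> 'a \<Rightarrow> 'a"
  assumes lie_algebra: "lie_algebra br"
    and two_step: "two_step_nilpotent br"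
begin

abbreviation Z :: "'a set" where "Z \<equiv> lie_center br"
abbreviation D :: "'a set" where "D \<equiv> derived_algebra br"

lemma bilinear_br: "bilinear br"
  using lie_algebra by (simp add: lie_algebra_def)

lemma bracket_antisym: "br x y = - br y x"
proof -
  have "0 = br (x + y) (x + y)"
    using lie_algebra by (simp add: lie_algebra_def)
  also have "\<dots> = br x x + br x y + (br y x + br y y)"
    by (simp add: bilinear_ladd[OF bilinear_br] bilinear_radd[OF bilinear_br])
  also have "\<dots> = br x y + br y x"
    using lie_algebra by (simp add: lie_algebra_def)
  finally show ?thesis
    by (simp add: eq_neg_iff_add_eq_0)
qed

lemma bracket_center_right: "z \<in> Z \<Longrightarrow> br x z = 0"
  by (simp add: lie_center_def bracket_antisym[of x z])

lemma subspace_center: "subspace Z"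
  by (rule subspace_lie_center[OF bilinear_br])

lemma bracket_in_derived: "br x y \<in> D"
  unfolding derived_algebra_def by (rule span_base) blast

lemma subspace_derived: "subspace D"
  unfolding derived_algebra_def by (rule subspace_span)

lemma derived_subset_center: "D \<subseteq> Z"
proof -
  have "br (br x y) w = 0" for x y w
    using two_step bracket_antisym[of "br x y" w] by (simp add: two_step_nilpotent_def)
  then have "br x y \<in> Z" for x y
    by (simp add: lie_center_def)
  then show ?thesis
    unfolding derived_algebra_def by (intro span_minimal subspace_center) blast
qed

lemma bracket_add_center:
  assumes "z \<in> Z" "z' \<in> Z"
  shows "br (x + z) (y + z') = br x y"
  using assms(1) bracket_center_right[OF assms(2)]
  by (simp add: bilinear_ladd[OF bilinear_br] bilinear_radd[OF bilinear_br] lie_center_def)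

end

locale central_correction = two_step_nilpotent_lie +
  fixes g q :: "'a \<Rightarrow> 'a"
  assumes add: "g (x + y) = g x + g y"
    and bracket: "g (br x y) = br (g x) (g y)"
    and center: "g x \<in> Z \<longleftrightarrow> x \<in> Z"
    and derived: "g ` D = D"
    and kernel: "d \<in> D \<Longrightarrow> g d = 0 \<Longrightarrow> d = 0"
    and surj_mod_center: "\<exists>x. w - g x \<in> Z"
    and q_linear: "linear q"
    and q_center: "q x \<in> Z"
    and q_derived: "d \<in> D \<Longrightarrow> q d = 0"
    and q_complement: "z \<in> Z \<Longrightarrow> z - q z \<in> D"
    and q_idem: "q (q x) = q x"
begin

text \<open>The corrected map agrees with \<open>g\<close> on the kernel of \<open>q\<close> and is the identity on the image
  of \<open>q\<close>, a complement of \<open>D\<close> in \<open>Z\<close>.\<close>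

definition corrected :: "'a \<Rightarrow> 'a" where
  "corrected x = g (x - q x) + q x"

lemma g_diff: "g (x - y) = g x - g y"
  using additive.diff[of g] add by (simp add: Modules.additive_def)

lemma q_kernel: "q (x - q x) = 0"
  by (simp add: linear_diff[OF q_linear] q_idem)

lemma corrected_add: "corrected (x + y) = corrected x + corrected y"
proof -
  have "x + y - q (x + y) = (x - q x) + (y - q y)"
    by (simp add: linear_add[OF q_linear])
  then have "corrected (x + y) = g ((x - q x) + (y - q y)) + q (x + y)"
    by (simp only: corrected_def)
  also have "\<dots> = corrected x + corrected y"
    by (simp add: corrected_def add linear_add[OF q_linear])
  finally show ?thesis .
qed

lemma corrected_bracket: "corrected (br x y) = br (corrected x) (corrected y)"
proof -
  have "br (corrected x) (corrected y) = g (br (x - q x) (y - q y))"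
    by (simp add: corrected_def bracket_add_center q_center bracket)
  also have "br (x - q x) (y - q y) = br x y"
    using bracket_add_center[OF subspace_neg[OF subspace_center q_center]
        subspace_neg[OF subspace_center q_center]]
    by simp
  finally show ?thesis
    using q_derived[OF bracket_in_derived] by (simp add: corrected_def)
qed

lemma corrected_eq_0: "corrected x = 0 \<Longrightarrow> x = 0"
proof -
  assume "corrected x = 0"
  define d where "d = x - q x"
  have gd: "g d = - q x"
    using \<open>corrected x = 0\<close> by (simp add: corrected_def d_def eq_neg_iff_add_eq_0)
  then have "d \<in> Z"
    using center[of d] subspace_neg[OF subspace_center q_center[of x]] by simp
  then have "d \<in> D"
    using q_complement[of d] q_kernel[of x] by (simp add: d_def)
  then have "g d \<in> D"
    using derived by (metis imageI)
  then have "q (g d) = 0"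
    by (rule q_derived)
  then have "q x = 0"
    by (simp add: gd linear_neg[OF q_linear] q_idem)
  then show "x = 0"
    using kernel[OF \<open>d \<in> D\<close>] gd by (simp add: d_def)
qed

lemma corrected_surj: "\<exists>x. w = corrected x"
proof -
  obtain x1 where "w - g x1 \<in> Z"
    using surj_mod_center by blast
  define y1 where "y1 = x1 - q x1"
  have z: "w - g y1 \<in> Z"
    using subspace_add[OF subspace_center \<open>w - g x1 \<in> Z\<close> center[THEN iffD2, OF q_center]]
    by (simp add: y1_def g_diff algebra_simps)
  have "(w - g y1) - q (w - g y1) \<in> g ` D"
    using q_complement[OF z] derived by simp
  then obtain d where d: "d \<in> D" "g d = (w - g y1) - q (w - g y1)"
    by auto
  define y where "y = y1 + d"
  have "q y = 0"
    by (simp add: y_def y1_def linear_add[OF q_linear] q_kernel q_derived[OF d(1)])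
  then have "corrected (y + q (w - g y1)) = g y + q (w - g y1)"
    by (simp add: corrected_def linear_add[OF q_linear] q_idem)
  also have "\<dots> = w"
    by (simp add: y_def add d(2))
  finally show ?thesis
    by metis
qed

lemma lie_ring_aut_corrected: "lie_ring_aut br corrected"
proof -
  have "inj corrected"
  proof (rule injI)
    fix x y assume "corrected x = corrected y"
    then have "corrected (x - y) = 0"
      using additive.diff[of corrected] corrected_add by (simp add: Modules.additive_def)
    then show "x = y"
      using corrected_eq_0[of "x - y"] by simp
  qed
  then show ?thesis
    using corrected_surj corrected_add corrected_bracket
    by (simp add: lie_ring_aut_def bij_def surj_def)
qed

lemma diff_corrected_center: "g x - corrected x \<in> Z"
proof -
  have "g x - corrected x = g (q x) - q x"
    by (simp add: corrected_def g_diff)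
  then show ?thesis
    using subspace_diff[OF subspace_center center[THEN iffD2, OF q_center] q_center] by simp
qed

end

context two_step_nilpotent_lie
begin

lemma lie_ring_aut_of_aut_mod_center:
  assumes add: "\<And>x y. g (x + y) = g x + g y"
    and bracket: "\<And>x y. g (br x y) = br (g x) (g y)"
    and center: "\<And>x. g x \<in> Z \<longleftrightarrow> x \<in> Z"
    and derived: "g ` D = D"
    and kernel: "\<And>d. d \<in> D \<Longrightarrow> g d = 0 \<Longrightarrow> d = 0"
    and surj_mod_center: "\<And>w. \<exists>x. w - g x \<in> Z"
  obtains H where "lie_ring_aut br H" "\<And>x. g x - H x \<in> Z"
proof -
  obtain q where q: "linear q" "\<And>x. q x \<in> Z" "\<And>d. d \<in> D \<Longrightarrow> q d = 0"
    "\<And>z. z \<in> Z \<Longrightarrow> z - q z \<in> D" "\<And>x. q (q x) = q x"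
    using exists_complement_projection[OF subspace_derived subspace_center derived_subset_center]
    by blast
  interpret central_correction br g q
    by (intro central_correction.intro two_step_nilpotent_lie_axioms central_correction_axioms.intro)
      (use assms q in auto)
  show ?thesis
    using that lie_ring_aut_corrected diff_corrected_center by blast
qed

end

section \<open>Automorphisms of the square of a nonsingular algebra\<close>

locale nonsingular_two_step_lie = two_step_nilpotent_lie +
  assumes nonsingular: "nonsingular br"
begin

abbreviation pbr :: "'a \<times> 'a \<Rightarrow> 'a \<times> 'a \<Rightarrow> 'a \<times> 'a" where "pbr \<equiv> prod_bracket br br"

lemma range_bracket: "range (br X) = (if X \<in> Z then {0} else D)"
  using nonsingular by (auto simp: nonsingular_def lie_center_def)

lemma exists_nonzero_bracket: obtains X y where "br X y \<noteq> 0"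
  using two_step by (auto simp: two_step_nilpotent_def)

lemma derived_eq_brackets: "D = {br x y | x y. True}"
proof
  obtain X y where "br X y \<noteq> 0"
    by (rule exists_nonzero_bracket)
  then have "X \<notin> Z"
    by (auto simp: lie_center_def)
  then have "D = range (br X)"
    by (simp add: range_bracket)
  then show "D \<subseteq> {br x y | x y. True}"
    by blast
qed (auto intro: bracket_in_derived)

lemma derived_neq_zero: "D \<noteq> {0}"
  using exists_nonzero_bracket bracket_in_derived by blast

lemma range_pbr: "range (pbr p) = (if fst p \<in> Z then {0} else D) \<times> (if snd p \<in> Z then {0} else D)"
  by (simp add: range_prod_bracket range_bracket)

lemma lie_ring_aut_image_derived_Times:
  "lie_ring_aut pbr F \<Longrightarrow> F ` (D \<times> D) = D \<times> D"
  using lie_ring_aut_image_brackets[of pbr F] brackets_prod_bracket[of br br] derived_eq_brackets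
  by simp

lemma lie_ring_aut_Pair: "lie_ring_aut pbr F \<Longrightarrow> F (x, y) = F (x, 0) + F (0, y)"
  using lie_ring_aut_add[of pbr F "(x, 0)" "(0, y)"] by simp

lemma exactly_one_component_noncentral:
  assumes F: "lie_ring_aut pbr F" and X: "X \<notin> Z"
  shows "fst (F (X, 0)) \<in> Z \<longleftrightarrow> snd (F (X, 0)) \<notin> Z"
proof
  assume "fst (F (X, 0)) \<in> Z"
  moreover have "F (X, 0) \<notin> lie_center pbr"
    using X lie_ring_aut_center_iff[OF F] by (simp add: lie_center_prod_bracket)
  ultimately show "snd (F (X, 0)) \<notin> Z"
    by (simp add: lie_center_prod_bracket mem_Times_iff)
next
  assume "snd (F (X, 0)) \<notin> Z"
  show "fst (F (X, 0)) \<in> Z"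
  proof (rule ccontr)
    assume "fst (F (X, 0)) \<notin> Z"
    then have "F ` (D \<times> {0}) = D \<times> D"
      using \<open>snd (F (X, 0)) \<notin> Z\<close> X lie_ring_aut_image_range[OF F, of "(X, 0)"]
      by (simp add: range_pbr subspace_0[OF subspace_center])
    then have "D \<times> {0} = D \<times> D"
      using lie_ring_aut_image_derived_Times[OF F] F
      by (metis bij_is_inj inj_image_eq_iff lie_ring_aut_def)
    then show False
      using derived_neq_zero subspace_0[OF subspace_derived] by (auto simp: set_eq_iff)
  qed
qed

lemma component_maps_into_center:
  assumes F: "lie_ring_aut pbr F"
  shows "(\<forall>X. snd (F (X, 0)) \<in> Z) \<or> (\<forall>X. fst (F (X, 0)) \<in> Z)"
proof -
  let ?A = "{X. snd (F (X, 0)) \<in> Z}" and ?B = "{X. fst (F (X, 0)) \<in> Z}"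
  have "X \<in> ?A \<union> ?B" for X
  proof (cases "X \<in> Z")
    case True
    then have "F (X, 0) \<in> Z \<times> Z"
      using lie_ring_aut_center_iff[OF F, of "(X, 0)"] subspace_0[OF subspace_center]
      by (simp add: lie_center_prod_bracket)
    then show ?thesis
      by (simp add: mem_Times_iff)
  next
    case False
    then show ?thesis
      using exactly_one_component_noncentral[OF F] by blast
  qed
  moreover have F_diff: "F (x - y, 0) = F (x, 0) - F (y, 0)" for x y
    using lie_ring_aut_diff[OF F, of "(x, 0)" "(y, 0)"] by simp
  then have "x - y \<in> ?A" if "x \<in> ?A" "y \<in> ?A" for x y
    using that subspace_diff[OF subspace_center] by simp
  moreover have "x - y \<in> ?B" if "x \<in> ?B" "y \<in> ?B" for x y
    using that subspace_diff[OF subspace_center] F_diff by simp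
  ultimately have "?A = UNIV \<or> ?B = UNIV"
    by (intro union_two_subgroups_eq_UNIV) blast+
  then show ?thesis
    by blast
qed

definition preserves_factors :: "('a \<times> 'a \<Rightarrow> 'a \<times> 'a) \<Rightarrow> bool" where
  "preserves_factors F \<longleftrightarrow> (\<forall>X. snd (F (X, 0)) \<in> Z \<and> fst (F (0, X)) \<in> Z)"

lemma preserves_or_swaps_factors:
  assumes F: "lie_ring_aut pbr F"
  shows "preserves_factors F \<or> preserves_factors (prod.swap \<circ> F)"
proof -
  have first: "(\<forall>X. snd (F (X, 0)) \<in> Z) \<or> (\<forall>X. fst (F (X, 0)) \<in> Z)"
    by (rule component_maps_into_center[OF F])
  have second: "(\<forall>Y. snd (F (0, Y)) \<in> Z) \<or> (\<forall>Y. fst (F (0, Y)) \<in> Z)"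
    using component_maps_into_center[OF lie_ring_aut_comp[OF F lie_ring_aut_swap]] by simp
  \<comment> \<open>Since \<open>(X\<^sub>0, X\<^sub>0)\<close> lies in the range of \<open>F\<close>, both factors cannot be sent into the same
    factor modulo the centre.\<close>
  obtain X0 y where "br X0 y \<noteq> 0"
    by (rule exists_nonzero_bracket)
  then have X0: "X0 \<notin> Z"
    by (auto simp: lie_center_def)
  obtain p where "F p = (X0, X0)"
    using surjD[OF lie_ring_aut_surj[OF F]] by metis
  then have sum: "(X0, X0) = F (fst p, 0) + F (0, snd p)"
    using lie_ring_aut_Pair[OF F, of "fst p" "snd p"] by simp
  have "X0 = fst (F (fst p, 0)) + fst (F (0, snd p))" "X0 = snd (F (fst p, 0)) + snd (F (0, snd p))"
    using arg_cong[OF sum, of fst] arg_cong[OF sum, of snd] by simp_all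
  then have "\<not> (snd (F (fst p, 0)) \<in> Z \<and> snd (F (0, snd p)) \<in> Z)"
    and "\<not> (fst (F (fst p, 0)) \<in> Z \<and> fst (F (0, snd p)) \<in> Z)"
    using X0 subspace_add[OF subspace_center] by metis+
  with first second show ?thesis
    unfolding preserves_factors_def by auto
qed

lemma lie_ring_aut_bracket_first_factor:
  "lie_ring_aut pbr G \<Longrightarrow> G (br x y, 0) = pbr (G (x, 0)) (G (y, 0))"
  using lie_ring_aut_bracket[of pbr G "(x, 0)" "(y, 0)"] by (simp add: bilinear_lzero[OF bilinear_br])

lemma first_component_image_derived:
  assumes G: "lie_ring_aut pbr G" and preserves: "preserves_factors G"
  shows "(\<lambda>X. fst (G (X, 0))) ` D = D"
proof (intro equalityI subsetI)
  fix d assume "d \<in> (\<lambda>X. fst (G (X, 0))) ` D"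
  then obtain X where "X \<in> D" "d = fst (G (X, 0))"
    by blast
  moreover obtain x y where "X = br x y"
    using \<open>X \<in> D\<close> derived_eq_brackets by blast
  ultimately show "d \<in> D"
    by (simp add: lie_ring_aut_bracket_first_factor[OF G] prod_bracket_def bracket_in_derived)
next
  fix d assume "d \<in> D"
  then obtain x y where d: "d = br x y"
    using derived_eq_brackets by blast
  obtain p p' where "G p = (x, 0)" "G p' = (y, 0)"
    using surjD[OF lie_ring_aut_surj[OF G]] by metis
  then have "(d, 0) = G (pbr p p')"
    by (simp add: d lie_ring_aut_bracket[OF G] bilinear_lzero[OF bilinear_br])
  also have "\<dots> = G (br (fst p) (fst p'), 0) + G (0, br (snd p) (snd p'))"
    using lie_ring_aut_Pair[OF G, of "br (fst p) (fst p')" "br (snd p) (snd p')"]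
    by (simp add: prod_bracket_def)
  finally have "fst (d, 0::'a) = fst (G (br (fst p) (fst p'), 0) + G (0, br (snd p) (snd p')))"
    by (rule arg_cong)
  moreover have "fst (G (0, br (snd p) (snd p'))) = 0"
    using lie_ring_aut_bracket[OF G, of "(0, snd p)" "(0, snd p')"] preserves
    by (simp add: bilinear_lzero[OF bilinear_br] prod_bracket_def lie_center_def preserves_factors_def)
  ultimately have "d = fst (G (br (fst p) (fst p'), 0))"
    by simp
  then show "d \<in> (\<lambda>X. fst (G (X, 0))) ` D"
    using bracket_in_derived by blast
qed

lemma first_component_surj_mod_center:
  assumes G: "lie_ring_aut pbr G" and preserves: "preserves_factors G"
  shows "\<exists>x. w - fst (G (x, 0)) \<in> Z"
proof -
  obtain p where "G p = (w, 0)"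
    using surjD[OF lie_ring_aut_surj[OF G]] by metis
  then have "(w, 0) = G (fst p, 0) + G (0, snd p)"
    using lie_ring_aut_Pair[OF G, of "fst p" "snd p"] by simp
  then have "fst (w, 0::'a) = fst (G (fst p, 0) + G (0, snd p))"
    by (rule arg_cong)
  then have "w - fst (G (fst p, 0)) = fst (G (0, snd p))"
    by simp
  also have "\<dots> \<in> Z"
    using preserves by (simp add: preserves_factors_def)
  finally show ?thesis ..
qed

lemma first_component_aut_mod_center:
  assumes G: "lie_ring_aut pbr G" and preserves: "preserves_factors G"
  obtains H where "lie_ring_aut br H" "\<And>X. fst (G (X, 0)) - H X \<in> Z"
proof -
  define g where "g X = fst (G (X, 0))" for X
  have snd_Z: "snd (G (X, 0)) \<in> Z" for X
    using preserves by (simp add: preserves_factors_def)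
  have add: "g (x + y) = g x + g y" for x y
    using lie_ring_aut_add[OF G, of "(x, 0)" "(y, 0)"] by (simp add: g_def)
  have bracket: "g (br x y) = br (g x) (g y)" for x y
    by (simp add: g_def lie_ring_aut_bracket_first_factor[OF G] prod_bracket_def)
  have center: "g x \<in> Z \<longleftrightarrow> x \<in> Z" for x
    using lie_ring_aut_center_iff[OF G, of "(x, 0)"] snd_Z[of x]
    by (simp add: lie_center_prod_bracket mem_Times_iff g_def subspace_0[OF subspace_center])
  have kernel: "d = 0" if "d \<in> D" "g d = 0" for d
  proof -
    obtain x y where "d = br x y"
      using \<open>d \<in> D\<close> derived_eq_brackets by blast
    then have "G (d, 0) = G 0"
      using \<open>g d = 0\<close> snd_Z[of x] lie_ring_aut_bracket_first_factor[OF G, of x y]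
      by (simp add: g_def prod_eq_iff prod_bracket_def lie_center_def lie_ring_aut_zero[OF G])
    then show "d = 0"
      by (simp add: lie_ring_aut_eq_iff[OF G] zero_prod_def)
  qed
  show ?thesis
    using lie_ring_aut_of_aut_mod_center[OF add bracket center
        first_component_image_derived[OF G preserves, folded g_def] kernel
        first_component_surj_mod_center[OF G preserves, folded g_def]] that
    unfolding g_def by blast
qed

lemma factor_preserving_aut_decomp:
  assumes G: "lie_ring_aut pbr G" and preserves: "preserves_factors G"
  obtains \<mu> H1 H2 where "central_aut pbr \<mu>" "lie_ring_aut br H1" "lie_ring_aut br H2"
    "G = \<mu> \<circ> map_prod H1 H2"
proof -
  obtain H1 where H1: "lie_ring_aut br H1" "\<And>X. fst (G (X, 0)) - H1 X \<in> Z"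
    using first_component_aut_mod_center[OF G preserves] by blast
  have "lie_ring_aut pbr (prod.swap \<circ> G \<circ> prod.swap)"
    using G lie_ring_aut_swap by (intro lie_ring_aut_comp)
  moreover have "preserves_factors (prod.swap \<circ> G \<circ> prod.swap)"
    using preserves by (simp add: preserves_factors_def)
  ultimately obtain H2 where H2: "lie_ring_aut br H2"
    and "\<And>X. fst ((prod.swap \<circ> G \<circ> prod.swap) (X, 0)) - H2 X \<in> Z"
    using first_component_aut_mod_center by blast
  then have H2_mod: "\<And>X. snd (G (0, X)) - H2 X \<in> Z"
    by simp
  define T where "T = map_prod H1 H2"
  have T: "lie_ring_aut pbr T"
    unfolding T_def using H1(1) H2 by (rule lie_ring_aut_map_prod)
  have "central_aut pbr (G \<circ> inv T)"
    unfolding central_aut_def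
  proof (intro conjI allI)
    show "lie_ring_aut pbr (G \<circ> inv T)"
      using G lie_ring_aut_inv[OF T] by (rule lie_ring_aut_comp)
    fix x
    obtain a b where ab: "inv T x = (a, b)"
      by (cases "inv T x")
    have x: "x = (H1 a, H2 b)"
      using ab lie_ring_aut_inv_apply[OF T, of x] by (simp add: T_def)
    have "(G \<circ> inv T) x = G (a, 0) + G (0, b)"
      using ab lie_ring_aut_Pair[OF G, of a b] by simp
    then have "(G \<circ> inv T) x - x =
        (fst (G (a, 0)) - H1 a + fst (G (0, b)), snd (G (a, 0)) + (snd (G (0, b)) - H2 b))"
      by (simp add: x prod_eq_iff algebra_simps)
    moreover have "snd (G (a, 0)) \<in> Z" "fst (G (0, b)) \<in> Z"
      using preserves by (simp_all add: preserves_factors_def)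
    ultimately show "(G \<circ> inv T) x - x \<in> lie_center pbr"
      using H1(2) H2_mod subspace_add[OF subspace_center] by (simp add: lie_center_prod_bracket)
  qed
  moreover have "G = (G \<circ> inv T) \<circ> T"
    by (simp add: fun_eq_iff lie_ring_aut_inv_apply_left[OF T])
  ultimately show ?thesis
    using that H1(1) H2 unfolding T_def by blast
qed

lemma factor_preserving_aut_partial_automatic_continuity:
  assumes pac: "partial_automatic_continuity br"
    and G: "lie_ring_aut pbr G" and preserves: "preserves_factors G"
  shows "\<exists>\<mu> f \<sigma>. central_aut pbr \<mu> \<and> lie_alg_aut pbr f \<and> field_aut pbr \<sigma> \<and> G = \<mu> \<circ> f \<circ> \<sigma>"
proof -
  obtain \<mu> H1 H2 where \<mu>: "central_aut pbr \<mu>" and H: "lie_ring_aut br H1" "lie_ring_aut br H2"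
    and G_eq: "G = \<mu> \<circ> map_prod H1 H2"
    by (rule factor_preserving_aut_decomp[OF G preserves])
  obtain \<mu>1 f1 \<sigma>1 where
    1: "central_aut br \<mu>1" "lie_alg_aut br f1" "field_aut br \<sigma>1" "H1 = \<mu>1 \<circ> f1 \<circ> \<sigma>1"
    using pac H(1) unfolding partial_automatic_continuity_def by blast
  obtain \<mu>2 f2 \<sigma>2 where
    2: "central_aut br \<mu>2" "lie_alg_aut br f2" "field_aut br \<sigma>2" "H2 = \<mu>2 \<circ> f2 \<circ> \<sigma>2"
    using pac H(2) unfolding partial_automatic_continuity_def by blast
  have "G = (\<mu> \<circ> map_prod \<mu>1 \<mu>2) \<circ> map_prod f1 f2 \<circ> map_prod \<sigma>1 \<sigma>2"
    by (simp add: G_eq 1(4) 2(4) map_prod.comp comp_assoc)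
  moreover have "central_aut pbr (\<mu> \<circ> map_prod \<mu>1 \<mu>2)"
    using bilinear_prod_bracket[OF bilinear_br bilinear_br] \<mu> central_aut_map_prod[OF 1(1) 2(1)]
    by (rule central_aut_comp)
  ultimately show ?thesis
    using lie_alg_aut_map_prod[OF 1(2) 2(2)] field_aut_map_prod[OF bilinear_br bilinear_br 1(3) 2(3)]
    by blast
qed

lemma partial_automatic_continuity_pbr:
  assumes pac: "partial_automatic_continuity br"
  shows "partial_automatic_continuity pbr"
  unfolding partial_automatic_continuity_def
proof (intro allI impI)
  fix F assume F: "lie_ring_aut pbr F"
  consider "preserves_factors F" | "preserves_factors (prod.swap \<circ> F)"
    using preserves_or_swaps_factors[OF F] by blast
  then show "\<exists>\<mu> f \<sigma>. central_aut pbr \<mu> \<and> lie_alg_aut pbr f \<and> field_aut pbr \<sigma> \<and> F = \<mu> \<circ> f \<circ> \<sigma>"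
  proof cases
    case 1
    then show ?thesis
      using factor_preserving_aut_partial_automatic_continuity[OF pac F] by blast
  next
    case 2
    obtain \<mu> f \<sigma> where "central_aut pbr \<mu>" "lie_alg_aut pbr f" "field_aut pbr \<sigma>"
      and swap_F: "prod.swap \<circ> F = \<mu> \<circ> f \<circ> \<sigma>"
      using factor_preserving_aut_partial_automatic_continuity[OF pac lie_ring_aut_comp[OF lie_ring_aut_swap F] 2]
      by blast
    moreover have "F = (prod.swap \<circ> \<mu> \<circ> prod.swap) \<circ> (prod.swap \<circ> f) \<circ> \<sigma>"
      using arg_cong[OF swap_F, of "(\<circ>) prod.swap"] by (simp add: fun_eq_iff)
    ultimately show ?thesis
      using central_aut_swap_conj lie_alg_aut_swap_comp by blast
  qed
qed

end

theorem proposition3p5: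
  fixes br :: "'a::euclidean_space \<Rightarrow> 'a \<Rightarrow> 'a"
  assumes "lie_algebra br"
    and "two_step_nilpotent br"
    and "nonsingular br"
    and "partial_automatic_continuity br"
  shows "partial_automatic_continuity (prod_bracket br br)"
proof -
  interpret nonsingular_two_step_lie br
    using assms(1-3) by unfold_locales
  show ?thesis
    using assms(4) by (rule partial_automatic_continuity_pbr)
qed

end
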